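(* Let $\sigma:\mathbb{R}\to\mathbb{R}$ be an increasing odd homeomorphism. The union of all $\sigma$-rational lines is dense in $\mathbb{R}^2$.
   Context: $h_\sigma(x,y)=(x+\sigma^{-1}(y),y)$, $v_\sigma(x,y)=(x,\sigma(x)+y)$. The $\sigma$-rational lines are: the axes $Ox=\mathbb{R}\times\{0\}$ and $Oy=\{0\}\times\mathbb{R}$; the sets $m(Ox)$ with $m$ in the monoid (containing the identity) generated by $h_\sigma,v_\sigma$; and the sets $m(Oy)$ with $m$ in the monoid generated by $h_\sigma^{-1},v_\sigma^{-1}$. *)

theory Defs
  imports "HOL-Analysis.Analysis"
begin

definition h_sig :: "(real \<Rightarrow> real) \<Rightarrow> real \<times> real \<Rightarrow> real \<times> real" where
  "h_sig \<sigma> = (\<lambda>(x, y). (x + inv \<sigma> y, y))"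

definition v_sig :: "(real \<Rightarrow> real) \<Rightarrow> real \<times> real \<Rightarrow> real \<times> real" where
  "v_sig \<sigma> = (\<lambda>(x, y). (x, \<sigma> x + y))"

inductive_set monoid_gen :: "('a \<Rightarrow> 'a) set \<Rightarrow> ('a \<Rightarrow> 'a) set" for G where
  gen_id: "id \<in> monoid_gen G"
| gen_step: "g \<in> G \<Longrightarrow> m \<in> monoid_gen G \<Longrightarrow> g \<circ> m \<in> monoid_gen G"

definition axis_x :: "(real \<times> real) set" where "axis_x = UNIV \<times> {0}"
definition axis_y :: "(real \<times> real) set" where "axis_y = {0} \<times> UNIV"

definition rational_lines :: "(real \<Rightarrow> real) \<Rightarrow> (real \<times> real) set set" where
  "rational_lines \<sigma> =
     {axis_x, axis_y}
     \<union> {m ` axis_x | m. m \<in> monoid_gen {h_sig \<sigma>, v_sig \<sigma>}}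
     \<union> {m ` axis_y | m. m \<in> monoid_gen {inv (h_sig \<sigma>), inv (v_sig \<sigma>)}}"

end

theory Submission
  imports Defs
begin

text \<open>
  Let \<open>M\<close> be the monoid generated by \<open>h\<^sub>\<sigma>\<close> and \<open>v\<^sub>\<sigma>\<close>. Since the graph of \<open>\<sigma>\<close> is \<open>v\<^sub>\<sigma>(Ox)\<close>,
  every curve \<open>m(graph \<sigma>)\<close> with \<open>m \<in> M\<close> is a \<open>\<sigma>\<close>-rational line, and it suffices to approximate
  each point \<open>(a, b)\<close> of the open first quadrant by such curves: the map \<open>p \<mapsto> -p\<close> commutes
  with all generators and \<open>(x, y) \<mapsto> (-x, y)\<close> conjugates \<open>h\<^sub>\<sigma>, v\<^sub>\<sigma>\<close> to their inverses, which
  covers the other quadrants.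
  Suppose the horizontal segment \<gamma> of length \<open>d\<close> starting at \<open>(a, b)\<close> met no curve \<open>m(graph \<sigma>)\<close>.
  Then every lift \<open>f\<close> of \<gamma> (a path with \<open>m \<circ> f = \<gamma>\<close>, \<open>m \<in> M\<close>) lies strictly above or strictly
  below the graph, and pulling it back by \<open>v\<^sub>\<sigma>\<^sup>-\<^sup>1\<close> resp. \<open>h\<^sub>\<sigma>\<^sup>-\<^sup>1\<close> gives a new lift inside the
  quadrant whose height drops by at least \<open>\<sigma> d\<close>, resp. whose height is kept and whose left end
  moves left by at least \<open>\<sigma>\<^sup>-\<^sup>1\<close> of the height. Such a lexicographic descent of positive reals
  cannot go on forever.
\<close>

lemma monoid_gen_generator: "g \<in> G \<Longrightarrow> g \<in> monoid_gen G"
  using gen_step[OF _ gen_id, of g G] by simp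

lemma monoid_gen_comp:
  "m1 \<in> monoid_gen G \<Longrightarrow> m2 \<in> monoid_gen G \<Longrightarrow> m1 \<circ> m2 \<in> monoid_gen G"
  by (induction m1 rule: monoid_gen.induct) (auto simp: comp_assoc intro: gen_step)

lemma monoid_gen_intertwine:
  assumes "\<And>g. g \<in> A \<Longrightarrow> \<exists>g'\<in>monoid_gen B. S \<circ> g = g' \<circ> S"
    and "m \<in> monoid_gen A"
  shows "\<exists>m'\<in>monoid_gen B. S \<circ> m = m' \<circ> S"
  using assms(2)
proof (induction m rule: monoid_gen.induct)
  case gen_id
  show ?case by (intro bexI[of _ id] monoid_gen.gen_id) simp
next
  case (gen_step g m)
  obtain g' m' where "g' \<in> monoid_gen B" "S \<circ> g = g' \<circ> S" "m' \<in> monoid_gen B" "S \<circ> m = m' \<circ> S"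
    using assms(1)[OF gen_step(1)] gen_step(3) by blast
  then have "S \<circ> (g \<circ> m) = (g' \<circ> m') \<circ> S"
    by (metis comp_assoc)
  then show ?case
    using \<open>g' \<in> monoid_gen B\<close> \<open>m' \<in> monoid_gen B\<close> monoid_gen_comp by blast
qed

lemma continuous_on_sign_constant:
  fixes g :: "'a::topological_space \<Rightarrow> real"
  assumes "connected S" and "continuous_on S g" and "\<And>x. x \<in> S \<Longrightarrow> g x \<noteq> 0"
  shows "(\<forall>x\<in>S. 0 < g x) \<or> (\<forall>x\<in>S. g x < 0)"
proof (rule ccontr)
  assume "\<not> ?thesis"
  then obtain p q where "p \<in> S" "q \<in> S" "g p < 0" "0 < g q"
    using assms(3) by (meson linorder_neqE_linordered_idom)
  moreover have "connected (g ` S)"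
    using assms(2,1) by (rule connected_continuous_image)
  ultimately have "0 \<in> g ` S"
    unfolding connected_iff_interval by (meson imageI less_imp_le)
  then show False
    using assms(3) by force
qed

lemma no_lexicographic_descent:
  fixes Y X :: "'a \<Rightarrow> real" and \<phi> :: "real \<Rightarrow> real"
  assumes "0 < c" and \<phi>_pos: "\<And>y. 0 < y \<Longrightarrow> 0 < \<phi> y"
    and pos: "\<And>s. P s \<Longrightarrow> 0 < Y s \<and> 0 < X s"
    and descent: "\<And>s. P s \<Longrightarrow> (\<exists>s'. P s' \<and> Y s' \<le> Y s - c) \<or>
                                 (\<exists>s'. P s' \<and> Y s' = Y s \<and> X s' \<le> X s - \<phi> (Y s))"
  shows "\<not> P s"
proof -
  have "\<not> P s" if "Y s < real k * c" for k s
    using that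
  proof (induction k arbitrary: s)
    case 0
    then show ?case using pos by fastforce
  next
    case (Suc k)
    have "\<not> P s" if "Y s < real (Suc k) * c" and "X s < real j * \<phi> (Y s)" for j s
      using that
    proof (induction j arbitrary: s)
      case 0
      then show ?case using pos by fastforce
    next
      case (Suc j)
      show ?case
      proof
        assume "P s"
        from descent[OF this] show False
        proof (elim disjE exE conjE)
          fix s' assume "P s'" and "Y s' \<le> Y s - c"
          with Suc.prems(1) show False
            using \<open>\<And>s. Y s < real k * c \<Longrightarrow> \<not> P s\<close> by (simp add: algebra_simps)
        next
          fix s' assume "P s'" and "Y s' = Y s" and "X s' \<le> X s - \<phi> (Y s)"
          with Suc.prems Suc.IH show False
            by (simp add: algebra_simps)
        qed
      qed
    qed
    then show ?case
      using ex_less_of_nat_mult \<phi>_pos pos Suc.prems by metis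
  qed
  then show ?thesis
    using ex_less_of_nat_mult[OF \<open>0 < c\<close>] by blast
qed

locale increasing_homeomorphism =
  fixes \<sigma> :: "real \<Rightarrow> real"
  assumes sigma_strict_mono: "strict_mono \<sigma>"
    and sigma_homeomorphism: "homeomorphism UNIV UNIV \<sigma> (inv \<sigma>)"
begin

abbreviation shears :: "(real \<times> real \<Rightarrow> real \<times> real) set" where
  "shears \<equiv> monoid_gen {h_sig \<sigma>, v_sig \<sigma>}"

abbreviation inverse_shears :: "(real \<times> real \<Rightarrow> real \<times> real) set" where
  "inverse_shears \<equiv> monoid_gen {inv (h_sig \<sigma>), inv (v_sig \<sigma>)}"

lemma inv_sigma_sigma [simp]: "inv \<sigma> (\<sigma> x) = x"
  and sigma_inv_sigma [simp]: "\<sigma> (inv \<sigma> y) = y"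
  using sigma_homeomorphism unfolding homeomorphism_def by auto

lemma sigma_less_iff [simp]: "\<sigma> x < \<sigma> y \<longleftrightarrow> x < y"
  and sigma_le_iff [simp]: "\<sigma> x \<le> \<sigma> y \<longleftrightarrow> x \<le> y"
  using sigma_strict_mono by (simp_all add: strict_mono_less strict_mono_less_eq)

lemma inv_sigma_less_iff [simp]: "inv \<sigma> x < inv \<sigma> y \<longleftrightarrow> x < y"
  and inv_sigma_le_iff [simp]: "inv \<sigma> x \<le> inv \<sigma> y \<longleftrightarrow> x \<le> y"
  by (metis sigma_inv_sigma sigma_less_iff, metis sigma_inv_sigma sigma_le_iff)

lemma continuous_on_sigma [continuous_intros]:
  "continuous_on S f \<Longrightarrow> continuous_on S (\<lambda>t. \<sigma> (f t))"
  and continuous_on_inv_sigma [continuous_intros]: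
  "continuous_on S f \<Longrightarrow> continuous_on S (\<lambda>t. inv \<sigma> (f t))"
  using sigma_homeomorphism continuous_on_compose2[of UNIV _ S f]
  unfolding homeomorphism_def by auto

lemma h_sig_apply [simp]: "h_sig \<sigma> (x, y) = (x + inv \<sigma> y, y)"
  and v_sig_apply [simp]: "v_sig \<sigma> (x, y) = (x, \<sigma> x + y)"
  by (simp_all add: h_sig_def v_sig_def)

lemma inv_h_sig: "inv (h_sig \<sigma>) = (\<lambda>(x, y). (x - inv \<sigma> y, y))"
  and inv_v_sig: "inv (v_sig \<sigma>) = (\<lambda>(x, y). (x, y - \<sigma> x))"
  by (rule inv_unique_comp; auto simp: fun_eq_iff)+

lemma shear_image_graph_in_rational_lines:
  "m \<in> shears \<Longrightarrow> m ` range (\<lambda>x. (x, \<sigma> x)) \<in> rational_lines \<sigma>"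
proof -
  assume "m \<in> shears"
  then have "m \<circ> v_sig \<sigma> \<in> shears"
    by (simp add: monoid_gen_comp monoid_gen_generator)
  moreover have "m ` range (\<lambda>x. (x, \<sigma> x)) = (m \<circ> v_sig \<sigma>) ` axis_x"
    by (auto simp: axis_x_def image_iff)
  ultimately show ?thesis
    unfolding rational_lines_def by blast
qed

text \<open>
  The endpoint conditions are what both pull-backs preserve: the stretch \<open>d\<close> forces the drop
  \<open>\<sigma> (x(1)) \<ge> \<sigma> d\<close> under \<open>v\<^sub>\<sigma>\<^sup>-\<^sup>1\<close>, and the non-increasing height keeps the stretch under \<open>h\<^sub>\<sigma>\<^sup>-\<^sup>1\<close>.
\<close>

definition quadrant_lift :: "real \<Rightarrow> (real \<Rightarrow> real \<times> real) \<Rightarrow> (real \<Rightarrow> real \<times> real) \<Rightarrow> bool"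
  where "quadrant_lift d \<gamma> f \<longleftrightarrow>
    continuous_on {0..1} f \<and>
    (\<forall>t\<in>{0..1}. 0 < fst (f t) \<and> 0 < snd (f t)) \<and>
    (\<exists>m\<in>shears. \<forall>t\<in>{0..1}. m (f t) = \<gamma> t) \<and>
    fst (f 0) + d \<le> fst (f 1) \<and> snd (f 1) \<le> snd (f 0)"

lemma quadrant_lift_side_of_graph:
  assumes "quadrant_lift d \<gamma> f"
    and avoid: "\<And>m x t. m \<in> shears \<Longrightarrow> t \<in> {0..1} \<Longrightarrow> m (x, \<sigma> x) \<noteq> \<gamma> t"
  shows "(\<forall>t\<in>{0..1}. \<sigma> (fst (f t)) < snd (f t)) \<or> (\<forall>t\<in>{0..1}. snd (f t) < \<sigma> (fst (f t)))"
proof -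
  obtain m where "m \<in> shears" and lift: "\<forall>t\<in>{0..1}. m (f t) = \<gamma> t"
    using assms(1) unfolding quadrant_lift_def by blast
  have "snd (f t) - \<sigma> (fst (f t)) \<noteq> 0" if "t \<in> {0..1}" for t
    using avoid[OF \<open>m \<in> shears\<close> that, of "fst (f t)"] lift that by (metis eq_iff_diff_eq_0 prod.collapse)
  moreover have "continuous_on {0..1} (\<lambda>t. snd (f t) - \<sigma> (fst (f t)))"
    using assms(1) unfolding quadrant_lift_def by (intro continuous_intros) auto
  ultimately have "(\<forall>t\<in>{0..1}. 0 < snd (f t) - \<sigma> (fst (f t))) \<or>
      (\<forall>t\<in>{0..1}. snd (f t) - \<sigma> (fst (f t)) < 0)"
    by (intro continuous_on_sign_constant) auto
  then show ?thesis
    by (simp only: diff_gt_0_iff_gt diff_less_0_iff_less)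
qed

lemma quadrant_lift_above_graph:
  assumes "0 \<le> d" and "quadrant_lift d \<gamma> f" and above: "\<And>t. t \<in> {0..1} \<Longrightarrow> \<sigma> (fst (f t)) < snd (f t)"
  shows "quadrant_lift d \<gamma> (inv (v_sig \<sigma>) \<circ> f)"
    and "snd ((inv (v_sig \<sigma>) \<circ> f) 1) \<le> snd (f 1) - \<sigma> d"
proof -
  obtain m where m: "m \<in> shears" "\<forall>t\<in>{0..1}. m (f t) = \<gamma> t"
    and cont: "continuous_on {0..1} f" and pos: "\<forall>t\<in>{0..1}. 0 < fst (f t) \<and> 0 < snd (f t)"
    and stretch: "fst (f 0) + d \<le> fst (f 1)" and height: "snd (f 1) \<le> snd (f 0)"
    using assms(2) unfolding quadrant_lift_def by blast
  have f': "inv (v_sig \<sigma>) \<circ> f = (\<lambda>t. (fst (f t), snd (f t) - \<sigma> (fst (f t))))"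
    by (simp add: inv_v_sig comp_def case_prod_beta)
  have "m \<circ> v_sig \<sigma> \<in> shears"
    using m(1) by (simp add: monoid_gen_comp monoid_gen_generator)
  moreover have "\<forall>t\<in>{0..1}. (m \<circ> v_sig \<sigma>) ((inv (v_sig \<sigma>) \<circ> f) t) = \<gamma> t"
    using m(2) by (simp add: f')
  moreover have "continuous_on {0..1} (inv (v_sig \<sigma>) \<circ> f)"
    unfolding f' using cont by (intro continuous_intros)
  moreover have "\<sigma> (fst (f 0)) \<le> \<sigma> (fst (f 1))"
    using stretch \<open>0 \<le> d\<close> by simp
  ultimately show "quadrant_lift d \<gamma> (inv (v_sig \<sigma>) \<circ> f)"
    unfolding quadrant_lift_def using pos above stretch height
    by (auto simp only: f' prod.sel) auto
  have "\<sigma> d \<le> \<sigma> (fst (f 1))"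
    using stretch pos[rule_format, of 0] by simp
  then show "snd ((inv (v_sig \<sigma>) \<circ> f) 1) \<le> snd (f 1) - \<sigma> d"
    by (simp add: f')
qed

lemma quadrant_lift_below_graph:
  assumes "quadrant_lift d \<gamma> f" and below: "\<And>t. t \<in> {0..1} \<Longrightarrow> snd (f t) < \<sigma> (fst (f t))"
  shows "quadrant_lift d \<gamma> (inv (h_sig \<sigma>) \<circ> f)"
    and "snd ((inv (h_sig \<sigma>) \<circ> f) 1) = snd (f 1)"
    and "fst ((inv (h_sig \<sigma>) \<circ> f) 0) \<le> fst (f 0) - inv \<sigma> (snd (f 1))"
proof -
  obtain m where m: "m \<in> shears" "\<forall>t\<in>{0..1}. m (f t) = \<gamma> t"
    and cont: "continuous_on {0..1} f" and pos: "\<forall>t\<in>{0..1}. 0 < fst (f t) \<and> 0 < snd (f t)"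
    and stretch: "fst (f 0) + d \<le> fst (f 1)" and height: "snd (f 1) \<le> snd (f 0)"
    using assms(1) unfolding quadrant_lift_def by blast
  have f': "inv (h_sig \<sigma>) \<circ> f = (\<lambda>t. (fst (f t) - inv \<sigma> (snd (f t)), snd (f t)))"
    by (simp add: inv_h_sig comp_def case_prod_beta)
  have "m \<circ> h_sig \<sigma> \<in> shears"
    using m(1) by (simp add: monoid_gen_comp monoid_gen_generator)
  moreover have "\<forall>t\<in>{0..1}. (m \<circ> h_sig \<sigma>) ((inv (h_sig \<sigma>) \<circ> f) t) = \<gamma> t"
    using m(2) by (simp add: f')
  moreover have "continuous_on {0..1} (inv (h_sig \<sigma>) \<circ> f)"
    unfolding f' using cont by (intro continuous_intros)
  moreover have "inv \<sigma> (snd (f t)) < fst (f t)" if "t \<in> {0..1}" for t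
    using below[OF that] inv_sigma_less_iff[of "snd (f t)" "\<sigma> (fst (f t))"] by simp
  moreover have "inv \<sigma> (snd (f 1)) \<le> inv \<sigma> (snd (f 0))"
    using height by simp
  ultimately show "quadrant_lift d \<gamma> (inv (h_sig \<sigma>) \<circ> f)"
    unfolding quadrant_lift_def using pos stretch height
    by (auto simp only: f' prod.sel) auto
  show "snd ((inv (h_sig \<sigma>) \<circ> f) 1) = snd (f 1)"
    by (simp add: f')
  show "fst ((inv (h_sig \<sigma>) \<circ> f) 0) \<le> fst (f 0) - inv \<sigma> (snd (f 1))"
    using height by (simp add: f')
qed

lemma no_quadrant_lift_avoiding_graphs:
  assumes "\<sigma> 0 = 0" and "0 < d"
    and avoid: "\<And>m x t. m \<in> shears \<Longrightarrow> t \<in> {0..1} \<Longrightarrow> m (x, \<sigma> x) \<noteq> \<gamma> t"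
  shows "\<not> quadrant_lift d \<gamma> f"
proof (rule no_lexicographic_descent[where P = "quadrant_lift d \<gamma>" and Y = "\<lambda>f. snd (f 1)"
      and X = "\<lambda>f. fst (f 0)" and c = "\<sigma> d" and \<phi> = "inv \<sigma>"])
  show "0 < \<sigma> d"
    using sigma_less_iff[of 0 d] \<open>0 < d\<close> assms(1) by simp
  show "0 < inv \<sigma> y" if "0 < y" for y
    using that assms(1) by (metis inv_sigma_sigma inv_sigma_less_iff)
  show "0 < snd (g 1) \<and> 0 < fst (g 0)" if "quadrant_lift d \<gamma> g" for g
    using that unfolding quadrant_lift_def by simp
next
  fix g assume g: "quadrant_lift d \<gamma> g"
  from quadrant_lift_side_of_graph[OF g] avoid
  show "(\<exists>g'. quadrant_lift d \<gamma> g' \<and> snd (g' 1) \<le> snd (g 1) - \<sigma> d) \<or>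
      (\<exists>g'. quadrant_lift d \<gamma> g' \<and> snd (g' 1) = snd (g 1) \<and>
            fst (g' 0) \<le> fst (g 0) - inv \<sigma> (snd (g 1)))"
    using quadrant_lift_above_graph[OF less_imp_le[OF \<open>0 < d\<close>] g]
      quadrant_lift_below_graph[OF g] by blast
qed

lemma first_quadrant_in_closure_shear_images_graph:
  assumes "\<sigma> 0 = 0" and "0 < a" and "0 < b"
  shows "(a, b) \<in> closure (\<Union>m\<in>shears. m ` range (\<lambda>x. (x, \<sigma> x)))"
proof -
  have "\<exists>m\<in>shears. \<exists>x. dist (m (x, \<sigma> x)) (a, b) < e" if "0 < e" for e
  proof (rule ccontr)
    assume far: "\<not> ?thesis"
    define d where "d = e / 2"
    define \<gamma> where "\<gamma> t = (a + t * d, b)" for t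
    have "0 < d"
      using \<open>0 < e\<close> by (simp add: d_def)
    have avoid: "m (x, \<sigma> x) \<noteq> \<gamma> t" if "m \<in> shears" and "t \<in> {0..1}" for m x t
    proof
      assume "m (x, \<sigma> x) = \<gamma> t"
      moreover have "dist (\<gamma> t) (a, b) = t * d"
        using that(2) \<open>0 < d\<close> by (simp add: \<gamma>_def dist_Pair_Pair dist_real_def)
      moreover have "t * d < e"
        using that(2) \<open>0 < e\<close> mult_left_le_one_le[of d t] by (simp add: d_def)
      ultimately show False
        using far that(1) by metis
    qed
    have "\<not> quadrant_lift d \<gamma> \<gamma>"
      using no_quadrant_lift_avoiding_graphs[OF assms(1) \<open>0 < d\<close>, of \<gamma>] avoid by blast
    moreover have "quadrant_lift d \<gamma> \<gamma>"
      unfolding quadrant_lift_def \<gamma>_def using \<open>0 < a\<close> \<open>0 < b\<close> \<open>0 < d\<close>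
      by (auto intro!: continuous_intros bexI[of _ id] monoid_gen.gen_id simp: add_pos_nonneg)
    ultimately show False
      by blast
  qed
  then show ?thesis
    unfolding closure_approachable by fast
qed

end

definition mirror :: "real \<times> real \<Rightarrow> real \<times> real" where
  "mirror = (\<lambda>(x, y). (- x, y))"

lemma mirror_mirror [simp]: "mirror (mirror p) = p"
  by (simp add: mirror_def case_prod_beta)

lemma linear_mirror: "linear mirror"
  by (rule linearI) (auto simp: mirror_def case_prod_beta)

lemma inj_mirror: "inj mirror"
  by (metis injI mirror_mirror)

locale odd_increasing_homeomorphism = increasing_homeomorphism +
  assumes sigma_minus: "\<sigma> (- x) = - \<sigma> x"
begin

lemma sigma_zero [simp]: "\<sigma> 0 = 0"
  using sigma_minus[of 0] by simp

lemma inv_sigma_minus: "inv \<sigma> (- y) = - inv \<sigma> y"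
  by (metis sigma_inv_sigma inv_sigma_sigma sigma_minus)

lemma uminus_image_rational_line:
  assumes "L \<in> rational_lines \<sigma>"
  shows "uminus ` L \<in> rational_lines \<sigma>"
proof -
  have commute: "uminus \<circ> h_sig \<sigma> = h_sig \<sigma> \<circ> uminus" "uminus \<circ> v_sig \<sigma> = v_sig \<sigma> \<circ> uminus"
    "uminus \<circ> inv (h_sig \<sigma>) = inv (h_sig \<sigma>) \<circ> uminus" "uminus \<circ> inv (v_sig \<sigma>) = inv (v_sig \<sigma>) \<circ> uminus"
    by (simp_all add: fun_eq_iff split_paired_All inv_sigma_minus sigma_minus inv_h_sig inv_v_sig)
  have shears: "\<exists>m'\<in>shears. uminus \<circ> m = m' \<circ> uminus" if "m \<in> shears" for m
    using monoid_gen_intertwine[OF _ that, of _ uminus] commute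
    by (metis insert_iff empty_iff monoid_gen_generator)
  have inverse_shears: "\<exists>m'\<in>inverse_shears. uminus \<circ> m = m' \<circ> uminus"
    if "m \<in> inverse_shears" for m
    using monoid_gen_intertwine[OF _ that, of _ uminus] commute
    by (metis insert_iff empty_iff monoid_gen_generator)
  have axes: "uminus ` axis_x = axis_x" "uminus ` axis_y = axis_y"
    by (auto simp: axis_x_def axis_y_def image_iff) (metis minus_minus)+
  from assms consider "L = axis_x" | "L = axis_y"
    | m where "m \<in> shears" "L = m ` axis_x" | m where "m \<in> inverse_shears" "L = m ` axis_y"
    unfolding rational_lines_def by blast
  then show ?thesis
  proof cases
    case (3 m)
    obtain m' where "m' \<in> shears" and "uminus \<circ> m = m' \<circ> uminus"
      using shears[OF 3(1)] by blast
    then have "uminus ` L = m' ` axis_x"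
      using 3(2) axes(1) by (metis image_comp)
    then show ?thesis
      using \<open>m' \<in> shears\<close> unfolding rational_lines_def by blast
  next
    case (4 m)
    obtain m' where "m' \<in> inverse_shears" and "uminus \<circ> m = m' \<circ> uminus"
      using inverse_shears[OF 4(1)] by blast
    then have "uminus ` L = m' ` axis_y"
      using 4(2) axes(2) by (metis image_comp)
    then show ?thesis
      using \<open>m' \<in> inverse_shears\<close> unfolding rational_lines_def by blast
  qed (use assms axes in auto)
qed

lemma mirror_image_shear_image_graph:
  assumes "m \<in> shears"
  shows "mirror ` m ` range (\<lambda>x. (x, \<sigma> x)) \<in> rational_lines \<sigma>"
proof -
  have "mirror \<circ> h_sig \<sigma> = inv (h_sig \<sigma>) \<circ> mirror" and "mirror \<circ> v_sig \<sigma> = inv (v_sig \<sigma>) \<circ> mirror"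
    by (auto simp: fun_eq_iff mirror_def inv_h_sig inv_v_sig sigma_minus)
  then obtain m' where "m' \<in> inverse_shears" and "mirror \<circ> m = m' \<circ> mirror"
    using monoid_gen_intertwine[OF _ assms, of "{inv (h_sig \<sigma>), inv (v_sig \<sigma>)}" mirror]
    by (metis insert_iff monoid_gen_generator empty_iff)
  moreover have "mirror ` range (\<lambda>x. (x, \<sigma> x)) = inv (h_sig \<sigma>) ` axis_y"
    by (auto simp: mirror_def inv_h_sig axis_y_def image_iff)
  ultimately have "mirror ` m ` range (\<lambda>x. (x, \<sigma> x)) = (m' \<circ> inv (h_sig \<sigma>)) ` axis_y"
    by (metis image_comp)
  moreover have "m' \<circ> inv (h_sig \<sigma>) \<in> inverse_shears"
    using \<open>m' \<in> inverse_shears\<close> by (simp add: monoid_gen_comp monoid_gen_generator)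
  ultimately show ?thesis
    unfolding rational_lines_def by blast
qed

lemma upper_half_plane_in_closure_rational_lines:
  assumes "0 < b" and "a \<noteq> 0"
  shows "(a, b) \<in> closure (\<Union> (rational_lines \<sigma>))"
proof -
  let ?U = "\<Union> (rational_lines \<sigma>)"
  let ?G = "\<Union>m\<in>shears. m ` range (\<lambda>x. (x, \<sigma> x))"
  have "?G \<subseteq> ?U"
    using shear_image_graph_in_rational_lines by blast
  moreover have "mirror ` ?G \<subseteq> ?U"
    using mirror_image_shear_image_graph by blast
  ultimately have "closure ?G \<subseteq> closure ?U" and "mirror ` closure ?G \<subseteq> closure ?U"
    unfolding closure_injective_linear_image[OF linear_mirror inj_mirror] by (simp_all add: closure_mono)
  show ?thesis
  proof (cases "0 < a")
    case True
    then show ?thesis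
      using first_quadrant_in_closure_shear_images_graph[OF sigma_zero True \<open>0 < b\<close>]
        \<open>closure ?G \<subseteq> closure ?U\<close> by blast
  next
    case False
    then have "(- a, b) \<in> closure ?G"
      using first_quadrant_in_closure_shear_images_graph[OF sigma_zero _ \<open>0 < b\<close>] assms(2) by simp
    then have "mirror (- a, b) \<in> closure ?U"
      using \<open>mirror ` closure ?G \<subseteq> closure ?U\<close> by blast
    then show ?thesis
      by (simp add: mirror_def)
  qed
qed

lemma closure_rational_lines: "closure (\<Union> (rational_lines \<sigma>)) = UNIV"
proof -
  let ?U = "\<Union> (rational_lines \<sigma>)"
  have "uminus ` ?U \<subseteq> ?U"
    using uminus_image_rational_line by blast
  then have "uminus ` closure ?U \<subseteq> closure ?U"
    unfolding closure_injective_linear_image[OF linear_uminus inj_uminus] by (rule closure_mono)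
  have "axis_x \<union> axis_y \<subseteq> closure ?U"
    using closure_subset[of ?U] by (auto simp: rational_lines_def)
  show ?thesis
  proof (intro set_eqI iffI UNIV_I)
    fix p :: "real \<times> real"
    obtain a b where p: "p = (a, b)"
      by fastforce
    consider "a = 0 \<or> b = 0" | "0 < b" "a \<noteq> 0" | "b < 0" "a \<noteq> 0"
      by linarith
    then show "p \<in> closure ?U"
    proof cases
      case 1
      then show ?thesis
        using \<open>axis_x \<union> axis_y \<subseteq> closure ?U\<close> by (auto simp: p axis_x_def axis_y_def)
    next
      case 2
      then show ?thesis
        using upper_half_plane_in_closure_rational_lines p by blast
    next
      case 3
      then have "- (- a, - b) \<in> closure ?U"
        using upper_half_plane_in_closure_rational_lines[of "- b" "- a"] \<open>uminus ` closure ?U \<subseteq> closure ?U\<close> by auto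
      then show ?thesis
        by (simp add: p)
    qed
  qed
qed

end

theorem proposition3:
  fixes \<sigma> :: "real \<Rightarrow> real"
  assumes "strict_mono \<sigma>"
    and "\<And>x. \<sigma> (- x) = - \<sigma> x"
    and "homeomorphism UNIV UNIV \<sigma> (inv \<sigma>)"
  shows "closure (\<Union> (rational_lines \<sigma>)) = UNIV"
proof -
  interpret odd_increasing_homeomorphism \<sigma>
    using assms by unfold_locales
  show ?thesis
    by (rule closure_rational_lines)
qed

end
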